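(* Assume that the lsc function $f:\mathbb{R}^n\to(-\infty,\infty]$ is prox-regular and subdifferentially continuous at $\bar x\in\operatorname{dom} f$ for the subgradient $\bar x^*\in\partial f(\bar x)$. Then there is a neighborhood $U\times V$ of $(\bar x,\bar x^* )$ such that for every $(x,x^* )\in \operatorname{gph}\partial f\cap (U\times V)$ the function $f$ is prox-regular and subdifferentially continuous at $x$ for $x^*$ and \begin{gather*}T_{\operatorname{gph} \partial f}^f(x,x^* )= T_{\operatorname{gph} \partial f}(x,x^* ),\ \widehat N_{\operatorname{gph} \partial f}^f(x,x^* )= \widehat N_{\operatorname{gph} \partial f}(x,x^* ),\ N_{\operatorname{gph} \partial f}^f(x,x^* )= N_{\operatorname{gph} \partial f}(x,x^* ),\\ D_f(\partial f)(x,x^* )=D(\partial f)(x,x^* ),\ \widehat D^*_f(\partial f)(x,x^* )=\widehat D^*(\partial f)(x,x^* ),\ D^*_f(\partial f)(x,x^* )=\widehat D^*(\partial f)(x,x^* ),\\ \mathcal{S}_f(\partial f)(x,x^* )=\mathcal{S}(\partial f)(x,x^* ),\ \mathcal{S}^*_f(\partial f)(x,x^* )=\mathcal{S}^*(\partial f)(x,x^* ). \end{gather*}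
   Context: $\partial f$ denotes the limiting subdifferential, $\operatorname{gph}$ the graph. $f$ is prox-regular at $\bar x$ for $\bar x^*$ if $f$ is finite at $\bar x$, $\bar x^*\in\partial f(\bar x)$, and there exist $\epsilon>0$, $r\ge 0$ with $f(x')\ge f(x)+\langle x^*,x'-x\rangle-\frac r2\|x'-x\|^2$ whenever $\|x'-\bar x\|<\epsilon$, $(x,x^* )\in\operatorname{gph}\partial f$, $\|x-\bar x\|<\epsilon$, $\|x^*-\bar x^*\|<\epsilon$, $f(x)<f(\bar x)+\epsilon$. $f$ is subdifferentially continuous at $\bar x$ for $\bar x^*$ if $(x_k,x_k^* )\to(\bar x,\bar x^* )$ with $(x_k,x_k^* )\in\operatorname{gph}\partial f$ implies $f(x_k)\to f(\bar x)$. Write $(x_k,x_k^* )\to_f(\bar x,\bar x^* )$ ($f$-attentive convergence in $\operatorname{gph}\partial f$) if $(x_k,x_k^* )\in\operatorname{gph}\partial f$, $(x_k,x_k^* )\to(\bar x,\bar x^* )$ and $f(x_k)\to f(\bar x)$. $T_\Omega$, $\widehat N_\Omega=(T_\Omega)^\circ$, $N_\Omega$ are the tangent, regular normal and limiting normal cones; $D$, $\widehat D^*$, $D^*$ the graphical derivative, regular and limiting coderivative ($\operatorname{gph}\widehat D^*F(\bar x,\bar y)=\{(y^*,x^* ): (x^*,-y^* )\in\widehat N_{\operatorname{gph}F}(\bar x,\bar y)\}$, similarly $D^*$ with $N$). The $f$-attentive versions are defined by replacing ordinary convergence in $\operatorname{gph}\partial f$ by $f$-attentive convergence: $T^f_{\operatorname{gph}\partial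 f}(\bar x,\bar x^* )$ is the set of limits $\lim_k ((x_k,x_k^* )-(\bar x,\bar x^* ))/t_k$ with $t_k\downarrow0$, $(x_k,x_k^* )\to_f(\bar x,\bar x^* )$; $\widehat N^f_{\operatorname{gph}\partial f}:=(T^f_{\operatorname{gph}\partial f})^\circ$; $N^f_{\operatorname{gph}\partial f}(\bar x,\bar x^* )$ is the outer limit of $\widehat N^f_{\operatorname{gph}\partial f}(x,x^* )$ as $(x,x^* )\to_f(\bar x,\bar x^* )$; $D_f(\partial f)$, $\widehat D^*_f(\partial f)$, $D^*_f(\partial f)$ are built from these cones as the ordinary ones. With $\mathcal Z_{nn}$ the space of $n$-dimensional subspaces of $\mathbb R^n\times\mathbb R^n$ with metric $d(L_1,L_2)=\|P_{L_1}-P_{L_2}\|$ (orthogonal projections), the SC derivative $\mathcal S(\partial f)(\bar x,\bar x^* )$ is the set of $L\in\mathcal Z_{nn}$ that are limits of $T_{\operatorname{gph}\partial f}(x_k,x_k^* )\in\mathcal Z_{nn}$ along $(x_k,x_k^* )\to(\bar x,\bar x^* )$ in $\operatorname{gph}\partial f$; the $f$-attentive SC derivative $\mathcal S_f(\partial f)(\bar x,\bar x^* )$ is the set of limits of $T^f_{\operatorname{gph}\partial f}(x_k,x_k^* )\in\mathcal Z_{nn}$ along $(x_k,x_k^* )\to_f(\bar x,\bar x^* )$. Adjoint versions: $\mathcal S^*=\{L^*: L\in\mathcal S\}$, $\mathcal S^*_f=\{L^*:L\in\mathcal S_f\}$, where $L^*=\{(v^*,u^* ): (u^*,-v^* )\in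 L^\perp\}$. *)

theory Defs
  imports "HOL-Analysis.Analysis"
begin

definition lsc :: "('a::euclidean_space \<Rightarrow> ereal) \<Rightarrow> bool" where
  "lsc f \<longleftrightarrow> (\<forall>x. f x \<le> Liminf (at x) f)"

definition rsubdiff :: "('a::euclidean_space \<Rightarrow> ereal) \<Rightarrow> 'a \<Rightarrow> 'a set" where
  "rsubdiff f x = {v. \<bar>f x\<bar> \<noteq> \<infinity> \<and>
     (\<forall>e>0. \<exists>d>0. \<forall>x'. norm (x' - x) < d \<longrightarrow>
        f x' \<ge> f x + ereal (inner v (x' - x) - e * norm (x' - x)))}"

definition subdiff :: "('a::euclidean_space \<Rightarrow> ereal) \<Rightarrow> 'a \<Rightarrow> 'a set" where
  "subdiff f x = {v. \<bar>f x\<bar> \<noteq> \<infinity> \<and>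
     (\<exists>xs vs. xs \<longlonglongrightarrow> x \<and> (\<lambda>k. f (xs k)) \<longlonglongrightarrow> f x \<and>
        (\<forall>k. vs k \<in> rsubdiff f (xs k)) \<and> vs \<longlonglongrightarrow> v)}"

definition gph_subdiff :: "('a::euclidean_space \<Rightarrow> ereal) \<Rightarrow> ('a \<times> 'a) set" where
  "gph_subdiff f = {(x, v). v \<in> subdiff f x}"

definition prox_regular :: "('a::euclidean_space \<Rightarrow> ereal) \<Rightarrow> 'a \<Rightarrow> 'a \<Rightarrow> bool" where
  "prox_regular f xb vb \<longleftrightarrow> \<bar>f xb\<bar> \<noteq> \<infinity> \<and> vb \<in> subdiff f xb \<and>
     (\<exists>e>0. \<exists>r\<ge>0. \<forall>x' x v. norm (x' - xb) < e \<and> v \<in> subdiff f x \<and> norm (x - xb) < e \<and>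
         norm (v - vb) < e \<and> f x < f xb + ereal e \<longrightarrow>
         f x' \<ge> f x + ereal (inner v (x' - x) - r / 2 * (norm (x' - x))\<^sup>2))"

definition subdiff_continuous :: "('a::euclidean_space \<Rightarrow> ereal) \<Rightarrow> 'a \<Rightarrow> 'a \<Rightarrow> bool" where
  "subdiff_continuous f xb vb \<longleftrightarrow>
     (\<forall>xs vs. (\<forall>k. vs k \<in> subdiff f (xs k)) \<and> xs \<longlonglongrightarrow> xb \<and> vs \<longlonglongrightarrow> vb
        \<longrightarrow> (\<lambda>k. f (xs k)) \<longlonglongrightarrow> f xb)"

definition f_attentive_conv :: "('a::euclidean_space \<Rightarrow> ereal) \<Rightarrow> (nat \<Rightarrow> 'a \<times> 'a) \<Rightarrow> 'a \<times> 'a \<Rightarrow> bool" where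
  "f_attentive_conv f zs z \<longleftrightarrow> (\<forall>k. zs k \<in> gph_subdiff f) \<and> zs \<longlonglongrightarrow> z \<and>
     (\<lambda>k. f (fst (zs k))) \<longlonglongrightarrow> f (fst z)"

definition conv_in :: "'b::real_normed_vector set \<Rightarrow> (nat \<Rightarrow> 'b) \<Rightarrow> 'b \<Rightarrow> bool" where
  "conv_in S zs z \<longleftrightarrow> (\<forall>k. zs k \<in> S) \<and> zs \<longlonglongrightarrow> z"

definition tangent_gen :: "((nat \<Rightarrow> 'b) \<Rightarrow> 'b \<Rightarrow> bool) \<Rightarrow> 'b::real_normed_vector \<Rightarrow> 'b set" where
  "tangent_gen C z = {w. \<exists>zs t. C zs z \<and> (\<forall>k. t k > 0) \<and> t \<longlonglongrightarrow> 0 \<and>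
      (\<lambda>k. (zs k - z) /\<^sub>R t k) \<longlonglongrightarrow> w}"

definition polar :: "'b::real_inner set \<Rightarrow> 'b set" where
  "polar K = {w. \<forall>v\<in>K. inner w v \<le> 0}"

definition rnormal_gen :: "((nat \<Rightarrow> 'b) \<Rightarrow> 'b \<Rightarrow> bool) \<Rightarrow> 'b::real_inner \<Rightarrow> 'b set" where
  "rnormal_gen C z = polar (tangent_gen C z)"

definition lnormal_gen :: "((nat \<Rightarrow> 'b) \<Rightarrow> 'b \<Rightarrow> bool) \<Rightarrow> 'b::{real_inner,real_normed_vector} \<Rightarrow> 'b set" where
  "lnormal_gen C z = {w. \<exists>zs ws. C zs z \<and> (\<forall>k. ws k \<in> rnormal_gen C (zs k)) \<and> ws \<longlonglongrightarrow> w}"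

abbreviation tangent_cone :: "'b::real_normed_vector set \<Rightarrow> 'b \<Rightarrow> 'b set" where
  "tangent_cone S \<equiv> tangent_gen (conv_in S)"
abbreviation rnormal_cone :: "'b::real_inner set \<Rightarrow> 'b \<Rightarrow> 'b set" where
  "rnormal_cone S \<equiv> rnormal_gen (conv_in S)"
abbreviation lnormal_cone :: "'b::real_inner set \<Rightarrow> 'b \<Rightarrow> 'b set" where
  "lnormal_cone S \<equiv> lnormal_gen (conv_in S)"

abbreviation tangent_f :: "('a::euclidean_space \<Rightarrow> ereal) \<Rightarrow> 'a \<times> 'a \<Rightarrow> ('a \<times> 'a) set" where
  "tangent_f f \<equiv> tangent_gen (f_attentive_conv f)"
abbreviation rnormal_f :: "('a::euclidean_space \<Rightarrow> ereal) \<Rightarrow> 'a \<times> 'a \<Rightarrow> ('a \<times> 'a) set" where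
  "rnormal_f f \<equiv> rnormal_gen (f_attentive_conv f)"
abbreviation lnormal_f :: "('a::euclidean_space \<Rightarrow> ereal) \<Rightarrow> 'a \<times> 'a \<Rightarrow> ('a \<times> 'a) set" where
  "lnormal_f f \<equiv> lnormal_gen (f_attentive_conv f)"

definition graph_deriv_of :: "('a \<times> 'a) set \<Rightarrow> 'a::real_vector \<Rightarrow> 'a set" where
  "graph_deriv_of T u = {v. (u, v) \<in> T}"

definition coderiv_of :: "('a \<times> 'a) set \<Rightarrow> 'a::real_vector \<Rightarrow> 'a set" where
  "coderiv_of N ys = {xs. (xs, - ys) \<in> N}"

text \<open>D(\<partial>f), \<^emph>\<open>regular\<close> D^*(\<partial>f), D^*(\<partial>f) and their f-attentive versions at (x,x*).\<close>
definition D_subdiff where "D_subdiff f x v = graph_deriv_of (tangent_cone (gph_subdiff f) (x, v))"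
definition rD_subdiff where "rD_subdiff f x v = coderiv_of (rnormal_cone (gph_subdiff f) (x, v))"
definition lD_subdiff where "lD_subdiff f x v = coderiv_of (lnormal_cone (gph_subdiff f) (x, v))"
definition D_f_subdiff where "D_f_subdiff f x v = graph_deriv_of (tangent_f f (x, v))"
definition rD_f_subdiff where "rD_f_subdiff f x v = coderiv_of (rnormal_f f (x, v))"
definition lD_f_subdiff where "lD_f_subdiff f x v = coderiv_of (lnormal_f f (x, v))"

definition Znn :: "('a::euclidean_space \<times> 'a) set set" where
  "Znn = {L. subspace L \<and> dim L = DIM('a)}"

definition proj :: "('a::euclidean_space \<times> 'a) set \<Rightarrow> 'a \<times> 'a \<Rightarrow> 'a \<times> 'a" where
  "proj L = closest_point L"

definition subspace_dist :: "('a::euclidean_space \<times> 'a) set \<Rightarrow> ('a \<times> 'a) set \<Rightarrow> real" where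
  "subspace_dist L1 L2 = onorm (\<lambda>z. proj L1 z - proj L2 z)"

definition SC_gen :: "((nat \<Rightarrow> 'a \<times> 'a) \<Rightarrow> 'a \<times> 'a \<Rightarrow> bool) \<Rightarrow> ('a \<times> 'a \<Rightarrow> ('a \<times> 'a) set)
     \<Rightarrow> 'a::euclidean_space \<times> 'a \<Rightarrow> ('a \<times> 'a) set set" where
  "SC_gen C T z = {L \<in> Znn. \<exists>zs. C zs z \<and> (\<forall>k. T (zs k) \<in> Znn) \<and>
      (\<lambda>k. subspace_dist (T (zs k)) L) \<longlonglongrightarrow> 0}"

definition SC_subdiff where
  "SC_subdiff f x v = SC_gen (conv_in (gph_subdiff f)) (tangent_cone (gph_subdiff f)) (x, v)"
definition SC_f_subdiff where
  "SC_f_subdiff f x v = SC_gen (f_attentive_conv f) (tangent_f f) (x, v)"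

definition adjoint_subspace :: "('a::euclidean_space \<times> 'a) set \<Rightarrow> ('a \<times> 'a) set" where
  "adjoint_subspace L = {(vs, us). (us, - vs) \<in> orthogonal_comp L}"

definition SC_adj_subdiff where "SC_adj_subdiff f x v = adjoint_subspace ` SC_subdiff f x v"
definition SC_f_adj_subdiff where "SC_f_adj_subdiff f x v = adjoint_subspace ` SC_f_subdiff f x v"

end

theory Submission
  imports Defs
begin

text \<open>Prox-regularity together with subdifferential continuity at (xb, vb) yields one prox-regularity
  inequality, with a single constant r, valid for all subgradients (x, v) in a neighbourhood U \<times> V
  (the localization f x < f xb + e is absorbed by subdifferential continuity). Such a uniform inequality
  makes f prox-regular at every (x, v) \<in> gph \<partial>f \<inter> (U \<times> V), and, applied once at (x, v) and once at a
  nearby (x', v'), squeezes f x' between two quantities tending to f x; so f is continuous along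
  gph \<partial>f there. Hence near (x, v) f-attentive convergence and ordinary convergence in gph \<partial>f are the same
  notion, and every cone built from one coincides with the cone built from the other. Only the
  hypotheses of prox-regularity and subdifferential continuity at (xb, vb) are used.\<close>

definition tail_invariant :: "((nat \<Rightarrow> 'b) \<Rightarrow> 'b \<Rightarrow> bool) \<Rightarrow> bool" where
  "tail_invariant C \<longleftrightarrow> (\<forall>zs z N. C zs z \<longrightarrow> C (\<lambda>k. zs (k + N)) z)"

definition agree_near :: "((nat \<Rightarrow> 'b) \<Rightarrow> 'b \<Rightarrow> bool) \<Rightarrow> ((nat \<Rightarrow> 'b) \<Rightarrow> 'b \<Rightarrow> bool) \<Rightarrow> 'b \<Rightarrow> bool" where
  "agree_near C1 C2 z \<longleftrightarrow> (\<forall>zs. C1 zs z = C2 zs z) \<and>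
     (\<forall>zs. C1 zs z \<longrightarrow> (\<forall>\<^sub>F k in sequentially. \<forall>ws. C1 ws (zs k) = C2 ws (zs k)))"

lemma agree_near_sym: "agree_near C1 C2 z \<Longrightarrow> agree_near C2 C1 z"
  unfolding agree_near_def by (auto elim!: eventually_mono)

lemma agree_nearD: "agree_near C1 C2 z \<Longrightarrow> C1 zs z = C2 zs z"
  unfolding agree_near_def by blast

lemma tail_invariant_conv_in: "tail_invariant (conv_in S)"
  unfolding tail_invariant_def conv_in_def by (auto intro: LIMSEQ_ignore_initial_segment)

lemma tail_invariant_f_attentive_conv: "tail_invariant (f_attentive_conv f)"
  unfolding tail_invariant_def f_attentive_conv_def
proof (intro allI impI)
  fix zs z N
  assume "(\<forall>k. zs k \<in> gph_subdiff f) \<and> zs \<longlonglongrightarrow> z \<and> (\<lambda>k. f (fst (zs k))) \<longlonglongrightarrow> f (fst z)"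
  then show "(\<forall>k. zs (k + N) \<in> gph_subdiff f) \<and> (\<lambda>k. zs (k + N)) \<longlonglongrightarrow> z \<and>
      (\<lambda>k. f (fst (zs (k + N)))) \<longlonglongrightarrow> f (fst z)"
    using LIMSEQ_ignore_initial_segment[of zs z N]
      LIMSEQ_ignore_initial_segment[of "\<lambda>k. f (fst (zs k))" "f (fst z)" N] by simp
qed

lemma tangent_gen_cong:
  assumes "\<And>ws. C1 ws z = C2 ws z"
  shows "tangent_gen C1 z = tangent_gen C2 z"
  unfolding tangent_gen_def by (simp only: assms)

lemma rnormal_gen_cong:
  assumes "\<And>ws. C1 ws z = C2 ws z"
  shows "rnormal_gen C1 z = rnormal_gen C2 z"
  unfolding rnormal_gen_def by (simp only: tangent_gen_cong[of C1 z C2, OF assms])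

lemma agree_near_tail:
  assumes "agree_near C1 C2 z" "tail_invariant C2" "C1 zs z"
  shows "\<exists>N. C2 (\<lambda>k. zs (k + N)) z \<and> (\<forall>k ws. C1 ws (zs (k + N)) = C2 ws (zs (k + N)))"
proof -
  obtain N where N: "\<And>k. k \<ge> N \<Longrightarrow> \<forall>ws. C1 ws (zs k) = C2 ws (zs k)"
    using assms(1,3) unfolding agree_near_def eventually_sequentially by blast
  have "C2 zs z"
    using assms(1,3) unfolding agree_near_def by blast
  then have "C2 (\<lambda>k. zs (k + N)) z"
    using assms(2) unfolding tail_invariant_def by blast
  moreover have "C1 ws (zs (k + N)) = C2 ws (zs (k + N))" for k ws
    using N[of "k + N"] by simp
  ultimately show ?thesis
    by blast
qed

lemma lnormal_gen_subset:
  assumes "agree_near C1 C2 z" "tail_invariant C2"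
  shows "lnormal_gen C1 z \<subseteq> lnormal_gen C2 z"
proof
  fix w assume "w \<in> lnormal_gen C1 z"
  then obtain zs ws where zs: "C1 zs z" and ws: "\<And>k. ws k \<in> rnormal_gen C1 (zs k)" "ws \<longlonglongrightarrow> w"
    unfolding lnormal_gen_def by blast
  obtain N where N: "C2 (\<lambda>k. zs (k + N)) z" "\<And>k ws. C1 ws (zs (k + N)) = C2 ws (zs (k + N))"
    using agree_near_tail[OF assms zs] by blast
  have R: "rnormal_gen C1 (zs (k + N)) = rnormal_gen C2 (zs (k + N))" for k
    by (rule rnormal_gen_cong) (rule N(2))
  have "\<forall>k. ws (k + N) \<in> rnormal_gen C2 (zs (k + N))"
    using ws(1) by (simp flip: R)
  with N(1) LIMSEQ_ignore_initial_segment[OF ws(2), of N] show "w \<in> lnormal_gen C2 z"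
    unfolding lnormal_gen_def mem_Collect_eq by (intro exI conjI)
qed

lemma lnormal_gen_cong:
  assumes "agree_near C1 C2 z" "tail_invariant C1" "tail_invariant C2"
  shows "lnormal_gen C1 z = lnormal_gen C2 z"
  using lnormal_gen_subset[OF assms(1,3)] lnormal_gen_subset[OF agree_near_sym[OF assms(1)] assms(2)]
  by (rule subset_antisym)

lemma SC_gen_subset:
  assumes "agree_near C1 C2 z" "tail_invariant C2"
  shows "SC_gen C1 (tangent_gen C1) z \<subseteq> SC_gen C2 (tangent_gen C2) z"
proof
  fix L assume "L \<in> SC_gen C1 (tangent_gen C1) z"
  then obtain zs where L: "L \<in> Znn" and zs: "C1 zs z" "\<And>k. tangent_gen C1 (zs k) \<in> Znn"
    "(\<lambda>k. subspace_dist (tangent_gen C1 (zs k)) L) \<longlonglongrightarrow> 0"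
    unfolding SC_gen_def by blast
  obtain N where N: "C2 (\<lambda>k. zs (k + N)) z" "\<And>k ws. C1 ws (zs (k + N)) = C2 ws (zs (k + N))"
    using agree_near_tail[OF assms zs(1)] by blast
  have T: "tangent_gen C1 (zs (k + N)) = tangent_gen C2 (zs (k + N))" for k
    by (rule tangent_gen_cong) (rule N(2))
  have "\<forall>k. tangent_gen C2 (zs (k + N)) \<in> Znn"
    using zs(2) by (simp flip: T)
  moreover have "(\<lambda>k. subspace_dist (tangent_gen C2 (zs (k + N))) L) \<longlonglongrightarrow> 0"
    using LIMSEQ_ignore_initial_segment[OF zs(3), of N] by (simp flip: T)
  ultimately show "L \<in> SC_gen C2 (tangent_gen C2) z"
    using L N(1)
    unfolding SC_gen_def mem_Collect_eq by (intro exI conjI)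
qed

lemma SC_gen_cong:
  assumes "agree_near C1 C2 z" "tail_invariant C1" "tail_invariant C2"
  shows "SC_gen C1 (tangent_gen C1) z = SC_gen C2 (tangent_gen C2) z"
  using SC_gen_subset[OF assms(1,3)] SC_gen_subset[OF agree_near_sym[OF assms(1)] assms(2)]
  by (rule subset_antisym)

definition uniformly_prox_regular_on :: "('a::euclidean_space \<Rightarrow> ereal) \<Rightarrow> real \<Rightarrow> 'a set \<Rightarrow> 'a set \<Rightarrow> bool" where
  "uniformly_prox_regular_on f r U V \<longleftrightarrow> (\<forall>x v y. x \<in> U \<and> v \<in> V \<and> v \<in> subdiff f x \<and> y \<in> U \<longrightarrow>
     f x + ereal (inner v (y - x) - r / 2 * (norm (y - x))\<^sup>2) \<le> f y)"

lemma uniformly_prox_regular_onD: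
  assumes "uniformly_prox_regular_on f r U V" "x \<in> U" "v \<in> V" "v \<in> subdiff f x" "y \<in> U"
  shows "f x + ereal (inner v (y - x) - r / 2 * (norm (y - x))\<^sup>2) \<le> f y"
  using assms unfolding uniformly_prox_regular_on_def by blast

lemma subdiff_finite: "v \<in> subdiff f x \<Longrightarrow> \<bar>f x\<bar> \<noteq> \<infinity>"
  unfolding subdiff_def by simp

lemma mem_gph_subdiff [simp]: "(x, v) \<in> gph_subdiff f \<longleftrightarrow> v \<in> subdiff f x"
  unfolding gph_subdiff_def by simp

lemma subdiff_continuousD:
  assumes "subdiff_continuous f x v" "\<forall>k. zs k \<in> gph_subdiff f" "zs \<longlonglongrightarrow> (x, v)"
  shows "(\<lambda>k. f (fst (zs k))) \<longlonglongrightarrow> f x"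
proof -
  have "\<forall>k. snd (zs k) \<in> subdiff f (fst (zs k))"
    using assms(2) by (metis mem_gph_subdiff prod.collapse)
  moreover have "(\<lambda>k. fst (zs k)) \<longlonglongrightarrow> x" "(\<lambda>k. snd (zs k)) \<longlonglongrightarrow> v"
    using tendsto_fst[OF assms(3)] tendsto_snd[OF assms(3)] by simp_all
  ultimately show ?thesis
    using assms(1) unfolding subdiff_continuous_def
    by (elim allE[of _ "\<lambda>k. fst (zs k)"] allE[of _ "\<lambda>k. snd (zs k)"]) blast
qed

lemma subdiff_continuous_locally_below:
  assumes "subdiff_continuous f xb vb" "f xb < c"
  obtains A B where "open A" "open B" "xb \<in> A" "vb \<in> B"
    "\<And>x v. x \<in> A \<Longrightarrow> v \<in> B \<Longrightarrow> v \<in> subdiff f x \<Longrightarrow> f x < c"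
proof -
  have "\<forall>\<^sub>F z in inf (nhds (xb, vb)) (principal (gph_subdiff f)). f (fst z) < c"
  proof (rule sequentially_imp_eventually_nhds_within, intro allI impI)
    fix zs assume "(\<forall>k. zs k \<in> gph_subdiff f) \<and> zs \<longlonglongrightarrow> (xb, vb)"
    then have "(\<lambda>k. f (fst (zs k))) \<longlonglongrightarrow> f xb"
      using subdiff_continuousD[OF assms(1)] by blast
    then show "\<forall>\<^sub>F k in sequentially. f (fst (zs k)) < c"
      using assms(2) by (rule order_tendstoD)
  qed
  then obtain T where T: "open T" "(xb, vb) \<in> T"
    and below: "\<And>z. z \<in> T \<Longrightarrow> z \<in> gph_subdiff f \<Longrightarrow> f (fst z) < c"
    unfolding eventually_inf_principal eventually_nhds by blast
  obtain A B where "open A" "open B" "(xb, vb) \<in> A \<times> B" "A \<times> B \<subseteq> T"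
    using open_prod_elim[OF T] by blast
  then show thesis
    using below by (intro that[of A B]) auto
qed

lemma uniformly_prox_regular_near:
  assumes "prox_regular f xb vb" "subdiff_continuous f xb vb"
  obtains U V r where "open U" "open V" "xb \<in> U" "vb \<in> V" "r \<ge> 0"
    "uniformly_prox_regular_on f r U V"
proof -
  obtain e r where e: "e > 0" and r: "r \<ge> 0"
    and ineq: "\<forall>y x v. norm (y - xb) < e \<and> v \<in> subdiff f x \<and> norm (x - xb) < e \<and>
      norm (v - vb) < e \<and> f x < f xb + ereal e \<longrightarrow>
      f x + ereal (inner v (y - x) - r / 2 * (norm (y - x))\<^sup>2) \<le> f y"
    using assms(1) unfolding prox_regular_def by blast
  have "f xb < f xb + ereal e"
    using assms(1) e unfolding prox_regular_def by (cases "f xb") auto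
  then obtain A B where AB: "open A" "open B" "xb \<in> A" "vb \<in> B"
    and below: "\<And>x v. x \<in> A \<Longrightarrow> v \<in> B \<Longrightarrow> v \<in> subdiff f x \<Longrightarrow> f x < f xb + ereal e"
    using subdiff_continuous_locally_below[OF assms(2)] by blast
  show thesis
  proof (rule that[of "A \<inter> ball xb e" "B \<inter> ball vb e" r])
    show "open (A \<inter> ball xb e)" "open (B \<inter> ball vb e)" "xb \<in> A \<inter> ball xb e" "vb \<in> B \<inter> ball vb e"
      using AB e by auto
    show "uniformly_prox_regular_on f r (A \<inter> ball xb e) (B \<inter> ball vb e)"
      unfolding uniformly_prox_regular_on_def
    proof (intro allI impI)
      fix x v y assume H: "x \<in> A \<inter> ball xb e \<and> v \<in> B \<inter> ball vb e \<and> v \<in> subdiff f x \<and> y \<in> A \<inter> ball xb e"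
      then have "f x < f xb + ereal e"
        using below by blast
      with H show "f x + ereal (inner v (y - x) - r / 2 * (norm (y - x))\<^sup>2) \<le> f y"
        by (intro ineq[rule_format] conjI) (auto simp: dist_norm norm_minus_commute)
    qed
  qed (fact r)
qed

lemma prox_regular_if_uniformly_prox_regular_on:
  assumes "uniformly_prox_regular_on f r U V" "r \<ge> 0" "open U" "open V" "x \<in> U" "v \<in> V"
    and "v \<in> subdiff f x"
  shows "prox_regular f x v"
proof -
  obtain e1 e2 where "e1 > 0" "ball x e1 \<subseteq> U" "e2 > 0" "ball v e2 \<subseteq> V"
    using assms(3-6) open_contains_ball by metis
  then have e: "min e1 e2 > 0" and U: "\<And>y. norm (y - x) < min e1 e2 \<Longrightarrow> y \<in> U"
    and V: "\<And>w. norm (w - v) < min e1 e2 \<Longrightarrow> w \<in> V"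
    by (auto simp: dist_norm norm_minus_commute)
  have "f y + ereal (inner w (x' - y) - r / 2 * (norm (x' - y))\<^sup>2) \<le> f x'"
    if "norm (x' - x) < min e1 e2" "w \<in> subdiff f y" "norm (y - x) < min e1 e2"
      "norm (w - v) < min e1 e2" for x' y w
    using assms(1) that U V unfolding uniformly_prox_regular_on_def by blast
  with e assms(2) have "\<exists>e>0. \<exists>r\<ge>0. \<forall>x' y w. norm (x' - x) < e \<and> w \<in> subdiff f y \<and>
      norm (y - x) < e \<and> norm (w - v) < e \<and> f y < f x + ereal e \<longrightarrow>
      f x' \<ge> f y + ereal (inner w (x' - y) - r / 2 * (norm (x' - y))\<^sup>2)"
    by blast
  then show ?thesis
    unfolding prox_regular_def using assms(7) subdiff_finite[OF assms(7)] by blast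
qed

lemma subdiff_continuous_if_uniformly_prox_regular_on:
  assumes "uniformly_prox_regular_on f r U V" "open U" "open V" "x \<in> U" "v \<in> V"
    and "v \<in> subdiff f x"
  shows "subdiff_continuous f x v"
  unfolding subdiff_continuous_def
proof (intro allI impI)
  fix xs vs assume H: "(\<forall>k. vs k \<in> subdiff f (xs k)) \<and> xs \<longlonglongrightarrow> x \<and> vs \<longlonglongrightarrow> v"
  obtain c where c: "f x = ereal c"
    using subdiff_finite[OF assms(6)] by (cases "f x") auto
  define lower where "lower k = c + (inner v (xs k - x) - r / 2 * (norm (xs k - x))\<^sup>2)" for k
  define upper where "upper k = c - (inner (vs k) (x - xs k) - r / 2 * (norm (x - xs k))\<^sup>2)" for k
  have "lower \<longlonglongrightarrow> c + (inner v (x - x) - r / 2 * (norm (x - x))\<^sup>2)"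
    unfolding lower_def using H by (intro tendsto_intros) auto
  then have lower: "(\<lambda>k. ereal (lower k)) \<longlonglongrightarrow> f x"
    by (simp add: c)
  have "upper \<longlonglongrightarrow> c - (inner v (x - x) - r / 2 * (norm (x - x))\<^sup>2)"
    unfolding upper_def using H by (intro tendsto_intros) auto
  then have upper: "(\<lambda>k. ereal (upper k)) \<longlonglongrightarrow> f x"
    by (simp add: c)
  have "\<forall>\<^sub>F k in sequentially. xs k \<in> U \<and> vs k \<in> V"
    using H assms(2-5) by (intro eventually_conj topological_tendstoD) auto
  then have "\<forall>\<^sub>F k in sequentially. ereal (lower k) \<le> f (xs k) \<and> f (xs k) \<le> ereal (upper k)"
  proof (rule eventually_mono)
    fix k assume k: "xs k \<in> U \<and> vs k \<in> V"
    have vs: "vs k \<in> subdiff f (xs k)"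
      using H by blast
    have "f x + ereal (inner v (xs k - x) - r / 2 * (norm (xs k - x))\<^sup>2) \<le> f (xs k)"
      using uniformly_prox_regular_onD[OF assms(1,4,5,6)] k by blast
    moreover have "f (xs k) + ereal (inner (vs k) (x - xs k) - r / 2 * (norm (x - xs k))\<^sup>2) \<le> f x"
      using uniformly_prox_regular_onD[OF assms(1) _ _ vs assms(4)] k by blast
    moreover note subdiff_finite[OF vs]
    ultimately show "ereal (lower k) \<le> f (xs k) \<and> f (xs k) \<le> ereal (upper k)"
      unfolding lower_def upper_def c by (cases "f (xs k)") auto
  qed
  then have "\<forall>\<^sub>F k in sequentially. ereal (lower k) \<le> f (xs k)"
    "\<forall>\<^sub>F k in sequentially. f (xs k) \<le> ereal (upper k)"
    by (auto elim: eventually_mono)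
  then show "(\<lambda>k. f (xs k)) \<longlonglongrightarrow> f x"
    by (rule tendsto_sandwich[OF _ _ lower upper])
qed

lemma f_attentive_conv_iff_conv_in:
  assumes "subdiff_continuous f x v"
  shows "f_attentive_conv f zs (x, v) \<longleftrightarrow> conv_in (gph_subdiff f) zs (x, v)"
  using subdiff_continuousD[OF assms] unfolding f_attentive_conv_def conv_in_def by auto

lemma agree_near_f_attentive_conv:
  assumes "open W" "(x, v) \<in> W" "v \<in> subdiff f x"
    and "\<And>y w. (y, w) \<in> W \<Longrightarrow> w \<in> subdiff f y \<Longrightarrow> subdiff_continuous f y w"
  shows "agree_near (f_attentive_conv f) (conv_in (gph_subdiff f)) (x, v)"
  unfolding agree_near_def
proof (intro conjI allI impI)
  show "f_attentive_conv f zs (x, v) = conv_in (gph_subdiff f) zs (x, v)" for zs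
    using assms(2-4) f_attentive_conv_iff_conv_in by blast
  fix zs assume zs: "f_attentive_conv f zs (x, v)"
  then have "\<forall>\<^sub>F k in sequentially. zs k \<in> W"
    using assms(1,2) unfolding f_attentive_conv_def by (blast intro: topological_tendstoD)
  then show "\<forall>\<^sub>F k in sequentially. \<forall>ws. f_attentive_conv f ws (zs k) = conv_in (gph_subdiff f) ws (zs k)"
  proof (rule eventually_mono)
    fix k assume "zs k \<in> W"
    moreover have "zs k \<in> gph_subdiff f"
      using zs unfolding f_attentive_conv_def by blast
    ultimately show "\<forall>ws. f_attentive_conv f ws (zs k) = conv_in (gph_subdiff f) ws (zs k)"
      using assms(4) f_attentive_conv_iff_conv_in by (metis mem_gph_subdiff prod.collapse)
  qed
qed

lemma f_attentive_cones_eq: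
  assumes "agree_near (f_attentive_conv f) (conv_in (gph_subdiff f)) (x, v)"
  shows "tangent_f f (x, v) = tangent_cone (gph_subdiff f) (x, v) \<and>
    rnormal_f f (x, v) = rnormal_cone (gph_subdiff f) (x, v) \<and>
    lnormal_f f (x, v) = lnormal_cone (gph_subdiff f) (x, v) \<and>
    D_f_subdiff f x v = D_subdiff f x v \<and>
    rD_f_subdiff f x v = rD_subdiff f x v \<and>
    lD_f_subdiff f x v = lD_subdiff f x v \<and>
    SC_f_subdiff f x v = SC_subdiff f x v \<and>
    SC_f_adj_subdiff f x v = SC_adj_subdiff f x v"
proof -
  have T: "tangent_f f (x, v) = tangent_cone (gph_subdiff f) (x, v)"
    by (rule tangent_gen_cong) (rule agree_nearD[OF assms])
  moreover have RN: "rnormal_f f (x, v) = rnormal_cone (gph_subdiff f) (x, v)"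
    by (rule rnormal_gen_cong) (rule agree_nearD[OF assms])
  moreover have LN: "lnormal_f f (x, v) = lnormal_cone (gph_subdiff f) (x, v)"
    by (rule lnormal_gen_cong[OF assms tail_invariant_f_attentive_conv tail_invariant_conv_in])
  moreover have SC: "SC_f_subdiff f x v = SC_subdiff f x v"
    unfolding SC_f_subdiff_def SC_subdiff_def
    by (rule SC_gen_cong[OF assms tail_invariant_f_attentive_conv tail_invariant_conv_in])
  ultimately show ?thesis
    unfolding D_f_subdiff_def D_subdiff_def rD_f_subdiff_def rD_subdiff_def
      lD_f_subdiff_def lD_subdiff_def SC_f_adj_subdiff_def SC_adj_subdiff_def
    by simp
qed

theorem lemma3p7:
  fixes f :: "'a::euclidean_space \<Rightarrow> ereal" and xb vb :: 'a
  assumes "\<forall>x. f x \<noteq> -\<infinity>"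
    and "lsc f"
    and "\<bar>f xb\<bar> \<noteq> \<infinity>"
    and "vb \<in> subdiff f xb"
    and "prox_regular f xb vb"
    and "subdiff_continuous f xb vb"
  shows "\<exists>U V. open U \<and> open V \<and> xb \<in> U \<and> vb \<in> V \<and>
    (\<forall>x v. (x, v) \<in> gph_subdiff f \<and> x \<in> U \<and> v \<in> V \<longrightarrow>
       prox_regular f x v \<and> subdiff_continuous f x v \<and>
       tangent_f f (x, v) = tangent_cone (gph_subdiff f) (x, v) \<and>
       rnormal_f f (x, v) = rnormal_cone (gph_subdiff f) (x, v) \<and>
       lnormal_f f (x, v) = lnormal_cone (gph_subdiff f) (x, v) \<and>
       D_f_subdiff f x v = D_subdiff f x v \<and>
       rD_f_subdiff f x v = rD_subdiff f x v \<and>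
       lD_f_subdiff f x v = lD_subdiff f x v \<and>
       SC_f_subdiff f x v = SC_subdiff f x v \<and>
       SC_f_adj_subdiff f x v = SC_adj_subdiff f x v)"
proof -
  obtain U V r where UV: "open U" "open V" "xb \<in> U" "vb \<in> V" and "r \<ge> 0"
    and uniform: "uniformly_prox_regular_on f r U V"
    using uniformly_prox_regular_near[OF assms(5,6)] by blast
  have prox: "prox_regular f x v" if "x \<in> U" "v \<in> V" "v \<in> subdiff f x" for x v
    using prox_regular_if_uniformly_prox_regular_on[OF uniform \<open>r \<ge> 0\<close> UV(1,2) that] .
  have continuous: "subdiff_continuous f x v" if "(x, v) \<in> U \<times> V" "v \<in> subdiff f x" for x v
    using subdiff_continuous_if_uniformly_prox_regular_on[OF uniform UV(1,2)] that by blast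
  have agree: "agree_near (f_attentive_conv f) (conv_in (gph_subdiff f)) (x, v)"
    if "x \<in> U" "v \<in> V" "v \<in> subdiff f x" for x v
    using agree_near_f_attentive_conv[of "U \<times> V"] UV(1,2) that continuous by (simp add: open_Times)
  show ?thesis
    by (rule exI[of _ U], rule exI[of _ V])
      (simp add: UV prox continuous f_attentive_cones_eq[OF agree])
qed

end
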